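(* Let $G$ be a connected graph, let $T$ be a spanning tree of $G$ rooted in $s$ which is an $\mathcal L$-tree of some DFS on $G$, and let $\sigma$ be a DFS order of the tree $T$ starting at $s$. Then $\sigma$ is a DFS order of $G$ and the $\mathcal L$-tree of $\sigma$ (with respect to $G$) is $T$.
   Context: Graphs are finite, simple, undirected. DFS: a search that starts at a vertex and repeatedly visits an unvisited neighbor of the most recently visited vertex that still has an unvisited neighbor; a DFS order of a graph is any order of its vertices produced this way. The $\mathcal L$-tree of a vertex order $(v_1,\dots,v_n)$ of a connected graph $G$ is the spanning tree rooted at $v_1$ with an edge from each $v_i$ ($i>1$) to its rightmost $G$-neighbor $v_j$ with $j<i$. A spanning tree $T$ rooted at $s$ is an $\mathcal L$-tree of DFS on $G$ if some DFS order of $G$ starting at $s$ has $\mathcal L$-tree $T$. *)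

theory Defs
  imports Main
begin

definition graph :: "'a set \<Rightarrow> ('a \<Rightarrow> 'a \<Rightarrow> bool) \<Rightarrow> bool" where
  "graph V E \<longleftrightarrow> finite V \<and> (\<forall>u v. E u v \<longrightarrow> E v u) \<and> (\<forall>u. \<not> E u u)
     \<and> (\<forall>u v. E u v \<longrightarrow> u \<in> V \<and> v \<in> V)"

definition connected_graph :: "'a set \<Rightarrow> ('a \<Rightarrow> 'a \<Rightarrow> bool) \<Rightarrow> bool" where
  "connected_graph V E \<longleftrightarrow> V \<noteq> {} \<and>
     (\<forall>u\<in>V. \<forall>v\<in>V. (u, v) \<in> {(x, y). E x y}\<^sup>*)"

definition edges :: "('a \<Rightarrow> 'a \<Rightarrow> bool) \<Rightarrow> 'a set set" where
  "edges E = {{u, v} | u v. E u v}"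

definition spanning_tree :: "'a set \<Rightarrow> ('a \<Rightarrow> 'a \<Rightarrow> bool) \<Rightarrow> ('a \<Rightarrow> 'a \<Rightarrow> bool) \<Rightarrow> 'a \<Rightarrow> bool" where
  "spanning_tree V E T s \<longleftrightarrow> graph V T \<and> (\<forall>u v. T u v \<longrightarrow> E u v) \<and> connected_graph V T
     \<and> card (edges T) = card V - 1 \<and> s \<in> V"

text \<open>It is a DFS order of (V,E) if for each position i > 0 the vertex at i is a
  neighbour of the most recently visited vertex (index j < i) that still has an
  unvisited neighbour, i.e. a neighbour among positions \<ge> i.\<close>
definition vertex_order :: "'a set \<Rightarrow> 'a list \<Rightarrow> bool" where
  "vertex_order V \<sigma> \<longleftrightarrow> distinct \<sigma> \<and> set \<sigma> = V"

definition has_unvisited_nb :: "('a \<Rightarrow> 'a \<Rightarrow> bool) \<Rightarrow> 'a list \<Rightarrow> nat \<Rightarrow> nat \<Rightarrow> bool" where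
  "has_unvisited_nb E \<sigma> k i \<longleftrightarrow> (\<exists>l. i \<le> l \<and> l < length \<sigma> \<and> E (\<sigma> ! k) (\<sigma> ! l))"

definition dfs_order :: "'a set \<Rightarrow> ('a \<Rightarrow> 'a \<Rightarrow> bool) \<Rightarrow> 'a list \<Rightarrow> bool" where
  "dfs_order V E \<sigma> \<longleftrightarrow> vertex_order V \<sigma> \<and> \<sigma> \<noteq> [] \<and>
     (\<forall>i. 0 < i \<and> i < length \<sigma> \<longrightarrow>
        (\<exists>j<i. has_unvisited_nb E \<sigma> j i \<and> (\<forall>k. j < k \<and> k < i \<longrightarrow> \<not> has_unvisited_nb E \<sigma> k i)
               \<and> E (\<sigma> ! j) (\<sigma> ! i)))"

text \<open>The L-tree of the vertex order \<sigma> (rooted at hd \<sigma>), as an undirected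
  adjacency relation: each v_i (i>0) is joined to its rightmost earlier
  neighbour v_j.\<close>
definition ltree :: "('a \<Rightarrow> 'a \<Rightarrow> bool) \<Rightarrow> 'a list \<Rightarrow> 'a \<Rightarrow> 'a \<Rightarrow> bool" where
  "ltree E \<sigma> u v \<longleftrightarrow> (\<exists>i j. i < length \<sigma> \<and> j < i \<and> E (\<sigma> ! j) (\<sigma> ! i) \<and>
      (\<forall>k. j < k \<and> k < i \<longrightarrow> \<not> E (\<sigma> ! k) (\<sigma> ! i)) \<and>
      ((u, v) = (\<sigma> ! j, \<sigma> ! i) \<or> (u, v) = (\<sigma> ! i, \<sigma> ! j)))"

definition is_dfs_ltree :: "'a set \<Rightarrow> ('a \<Rightarrow> 'a \<Rightarrow> bool) \<Rightarrow> ('a \<Rightarrow> 'a \<Rightarrow> bool) \<Rightarrow> 'a \<Rightarrow> bool" where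
  "is_dfs_ltree V E T s \<longleftrightarrow> spanning_tree V E T s \<and>
     (\<exists>\<tau>. dfs_order V E \<tau> \<and> hd \<tau> = s \<and> ltree E \<tau> = T)"

end

theory Submission
  imports Defs
begin

text \<open>Let \<open>\<tau>\<close> be a DFS order of \<open>G\<close> with \<open>\<L>\<close>-tree \<open>T\<close>, so that \<open>T\<close> is the tree of
  \<open>\<L>\<close>-parents in \<open>\<tau>\<close>. In \<open>\<tau>\<close>, a vertex that still has an unvisited neighbour when
  \<open>v\<close> is visited is a \<open>T\<close>-ancestor of \<open>v\<close>; hence every edge of \<open>G\<close> joins a vertex to one of
  its \<open>T\<close>-ancestors. In the DFS order \<open>\<sigma>\<close> of \<open>T\<close> ancestors precede descendants. When
  \<open>\<sigma>\<close> discovers \<open>\<sigma>\<^sub>i\<close> from \<open>\<sigma>\<^sub>j\<close>, every \<open>\<sigma>\<^sub>k\<close> with \<open>j < k < i\<close> has no unvisited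
  \<open>T\<close>-neighbour, hence no \<open>T\<close>-descendant at a position \<open>\<ge> i\<close>, hence no unvisited
  \<open>G\<close>-neighbour. So \<open>\<sigma>\<close> makes the same choices in \<open>G\<close> as in \<open>T\<close>, and \<open>\<sigma>\<^sub>j\<close>, the
  \<open>T\<close>-parent of \<open>\<sigma>\<^sub>i\<close>, is also its rightmost earlier \<open>G\<close>-neighbour.\<close>

lemma rtranclp_leaves_set:
  assumes "R\<^sup>*\<^sup>* x y" "x \<in> A" "y \<notin> A"
  shows "\<exists>u v. R\<^sup>*\<^sup>* x u \<and> u \<in> A \<and> R u v \<and> v \<notin> A \<and> R\<^sup>*\<^sup>* v y"
  using assms(1,3)
proof (induction rule: rtranclp_induct)
  case base
  then show ?case using assms(2) by simp
next
  case (step y z)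
  then show ?case by (cases "y \<in> A") (auto intro: rtranclp.rtrancl_into_rtrancl)
qed

definition lparent :: "('a \<Rightarrow> 'a \<Rightarrow> bool) \<Rightarrow> 'a list \<Rightarrow> 'a \<Rightarrow> 'a \<Rightarrow> bool" where
  "lparent E \<sigma> u v \<longleftrightarrow> (\<exists>i j. i < length \<sigma> \<and> j < i \<and> E (\<sigma> ! j) (\<sigma> ! i) \<and>
      (\<forall>k. j < k \<and> k < i \<longrightarrow> \<not> E (\<sigma> ! k) (\<sigma> ! i)) \<and> u = \<sigma> ! j \<and> v = \<sigma> ! i)"

lemma ltree_iff_lparent: "ltree E \<sigma> u v \<longleftrightarrow> lparent E \<sigma> u v \<or> lparent E \<sigma> v u"
  unfolding ltree_def lparent_def by blast

lemma ltree_imp_edge: "symp E \<Longrightarrow> ltree E \<sigma> u v \<Longrightarrow> E u v"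
  unfolding ltree_def by (auto dest: sympD simp del: nth_mem)

lemma lparent_nth_iff:
  assumes "distinct \<sigma>" "i < length \<sigma>" "j < i" "E (\<sigma> ! j) (\<sigma> ! i)"
    and "\<forall>k. j < k \<and> k < i \<longrightarrow> \<not> E (\<sigma> ! k) (\<sigma> ! i)"
  shows "lparent E \<sigma> u (\<sigma> ! i) \<longleftrightarrow> u = \<sigma> ! j"
proof
  assume "lparent E \<sigma> u (\<sigma> ! i)"
  then obtain i' j' where i': "i' < length \<sigma>" "j' < i'" "E (\<sigma> ! j') (\<sigma> ! i')"
      "\<forall>k. j' < k \<and> k < i' \<longrightarrow> \<not> E (\<sigma> ! k) (\<sigma> ! i')" "u = \<sigma> ! j'" "\<sigma> ! i = \<sigma> ! i'"
    unfolding lparent_def by blast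
  then have "i' = i" using assms(1,2) nth_eq_iff_index_eq by metis
  then have "j' = j" using assms(3-5) i'(2-4) by (metis linorder_neqE_nat)
  then show "u = \<sigma> ! j" using i'(5) by simp
next
  assume "u = \<sigma> ! j"
  then show "lparent E \<sigma> u (\<sigma> ! i)"
    unfolding lparent_def using assms(2-5) by blast
qed

lemma lparent_unique:
  assumes "distinct \<sigma>" "lparent E \<sigma> u v" "lparent E \<sigma> u' v"
  shows "u = u'"
proof -
  from assms(2) obtain i j where "i < length \<sigma>" "j < i" "E (\<sigma> ! j) (\<sigma> ! i)"
      "\<forall>k. j < k \<and> k < i \<longrightarrow> \<not> E (\<sigma> ! k) (\<sigma> ! i)" "v = \<sigma> ! i"
    unfolding lparent_def by blast
  with assms show ?thesis using lparent_nth_iff by metis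
qed

lemma lparent_in_set: "lparent E \<sigma> u v \<Longrightarrow> v \<in> set \<sigma>"
  unfolding lparent_def by auto

lemma lparent_hd:
  assumes "distinct \<sigma>"
  shows "\<not> lparent E \<sigma> u (hd \<sigma>)"
proof
  assume "lparent E \<sigma> u (hd \<sigma>)"
  then obtain i j where "i < length \<sigma>" "j < i" "hd \<sigma> = \<sigma> ! i"
    unfolding lparent_def by blast
  moreover have "hd \<sigma> = \<sigma> ! 0"
    using \<open>i < length \<sigma>\<close> by (auto intro: hd_conv_nth)
  ultimately show False
    using assms nth_eq_iff_index_eq by fastforce
qed

lemma dfs_order_distinct: "dfs_order V E \<sigma> \<Longrightarrow> distinct \<sigma>"
  and dfs_order_set: "dfs_order V E \<sigma> \<Longrightarrow> set \<sigma> = V"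
  unfolding dfs_order_def vertex_order_def by simp_all

lemma dfs_order_step:
  "dfs_order V E \<sigma> \<Longrightarrow> 0 < i \<Longrightarrow> i < length \<sigma> \<Longrightarrow> \<exists>j<i. has_unvisited_nb E \<sigma> j i \<and>
     (\<forall>k. j < k \<and> k < i \<longrightarrow> \<not> has_unvisited_nb E \<sigma> k i) \<and> E (\<sigma> ! j) (\<sigma> ! i)"
  unfolding dfs_order_def by blast

lemma dfs_order_unfinished_ancestor:
  assumes dfs: "dfs_order V E \<tau>" and "b < length \<tau>" "a < b" "has_unvisited_nb E \<tau> a b"
  shows "(lparent E \<tau>)\<^sup>*\<^sup>* (\<tau> ! a) (\<tau> ! b)"
  using assms(2-4)
proof (induction b arbitrary: a rule: less_induct)
  case (less b)
  then obtain j where j: "j < b" "has_unvisited_nb E \<tau> j b"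
      "\<forall>k. j < k \<and> k < b \<longrightarrow> \<not> has_unvisited_nb E \<tau> k b" "E (\<tau> ! j) (\<tau> ! b)"
    using dfs_order_step[OF dfs] by (metis gr_zeroI not_less_zero)
  \<comment> \<open>\<open>\<tau>\<^sub>b\<close> is discovered from its \<open>\<L>\<close>-parent \<open>\<tau>\<^sub>j\<close>, and the unfinished \<open>\<tau>\<^sub>a\<close> cannot lie strictly between them.\<close>
  have "lparent E \<tau> (\<tau> ! j) (\<tau> ! b)"
    using j less.prems(1) unfolding lparent_def has_unvisited_nb_def by blast
  moreover have "(lparent E \<tau>)\<^sup>*\<^sup>* (\<tau> ! a) (\<tau> ! j)"
  proof (cases "a < j")
    case True
    have "has_unvisited_nb E \<tau> a j"
      using less.prems(3) j(1) unfolding has_unvisited_nb_def by (meson le_trans less_imp_le)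
    then show ?thesis using less.IH j(1) less.prems(1) True by simp
  next
    case False
    then have "a = j" using j(3) less.prems by (metis linorder_neqE_nat)
    then show ?thesis by simp
  qed
  ultimately show ?case by (simp add: rtranclp.rtrancl_into_rtrancl)
qed

lemma dfs_order_edge_ancestor:
  assumes dfs: "dfs_order V E \<tau>" and "symp E" "E u v" "u \<in> V" "v \<in> V"
  shows "(lparent E \<tau>)\<^sup>*\<^sup>* u v \<or> (lparent E \<tau>)\<^sup>*\<^sup>* v u"
proof -
  have forward: "(lparent E \<tau>)\<^sup>*\<^sup>* (\<tau> ! a) (\<tau> ! b)"
    if "a < b" "b < length \<tau>" "E (\<tau> ! a) (\<tau> ! b)" for a b
    using dfs_order_unfinished_ancestor[OF dfs] that unfolding has_unvisited_nb_def by blast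
  obtain a b where "a < length \<tau>" "u = \<tau> ! a" "b < length \<tau>" "v = \<tau> ! b"
    using assms(4,5) dfs_order_set[OF dfs] by (metis in_set_conv_nth)
  with forward assms(2,3) show ?thesis
    by (cases a b rule: linorder_cases) (auto dest: sympD)
qed

locale rooted_tree_dfs =
  fixes V :: "'a set" and T P :: "'a \<Rightarrow> 'a \<Rightarrow> bool" and \<sigma> :: "'a list"
  assumes dfs: "dfs_order V T \<sigma>"
    and tree_iff_parent: "T u v \<longleftrightarrow> P u v \<or> P v u"
    and parent_unique: "P u v \<Longrightarrow> P u' v \<Longrightarrow> u = u'"
    and root_orphan: "\<not> P u (hd \<sigma>)"
begin

lemma distinct_order: "distinct \<sigma>"
  using dfs by (rule dfs_order_distinct)

lemma parent_precedes: "i < length \<sigma> \<Longrightarrow> P u (\<sigma> ! i) \<Longrightarrow> \<exists>k<i. u = \<sigma> ! k"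
proof (induction i arbitrary: u rule: less_induct)
  case (less i)
  have "i \<noteq> 0"
    using less.prems root_orphan by (metis hd_conv_nth length_greater_0_conv)
  then obtain j where j: "j < i" "T (\<sigma> ! j) (\<sigma> ! i)"
    using dfs_order_step[OF dfs] less.prems(1) by blast
  have "\<not> P (\<sigma> ! i) (\<sigma> ! j)"
  proof
    assume "P (\<sigma> ! i) (\<sigma> ! j)"
    then obtain k where "k < j" "\<sigma> ! i = \<sigma> ! k"
      using less.IH j(1) less.prems(1) by auto
    then show False
      using distinct_order j(1) less.prems(1) nth_eq_iff_index_eq by fastforce
  qed
  then have "P (\<sigma> ! j) (\<sigma> ! i)"
    using j(2) tree_iff_parent by blast
  then show ?case
    using parent_unique less.prems(2) j(1) by blast
qed

lemma dfs_edge_is_parent: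
  assumes "i < length \<sigma>" "j < i" "T (\<sigma> ! j) (\<sigma> ! i)"
  shows "P (\<sigma> ! j) (\<sigma> ! i)"
proof -
  have "\<not> P (\<sigma> ! i) (\<sigma> ! j)"
  proof
    assume "P (\<sigma> ! i) (\<sigma> ! j)"
    then obtain k where "k < j" "\<sigma> ! i = \<sigma> ! k"
      using parent_precedes assms(1,2) by (meson order.strict_trans)
    then show False
      using distinct_order assms(1,2) nth_eq_iff_index_eq by fastforce
  qed
  then show ?thesis
    using assms(3) tree_iff_parent by blast
qed

lemma ancestor_in_prefix:
  "P\<^sup>*\<^sup>* v (\<sigma> ! b) \<Longrightarrow> b < length \<sigma> \<Longrightarrow> \<exists>a\<le>b. v = \<sigma> ! a"
proof (induction rule: converse_rtranclp_induct)
  case base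
  then show ?case by blast
next
  case (step v w)
  then obtain m where m: "m \<le> b" "w = \<sigma> ! m"
    by blast
  then obtain k where "k < m" "v = \<sigma> ! k"
    using parent_precedes[of m v] step.hyps(1) step.prems by auto
  with m(1) show ?case
    by (intro exI[of _ k]) simp
qed

lemma ancestor_precedes:
  assumes "P\<^sup>*\<^sup>* (\<sigma> ! a) (\<sigma> ! b)" "a < length \<sigma>" "b < length \<sigma>"
  shows "a \<le> b"
proof -
  obtain c where "c \<le> b" "\<sigma> ! a = \<sigma> ! c"
    using ancestor_in_prefix assms(1,3) by blast
  then show ?thesis
    using distinct_order assms(2,3) nth_eq_iff_index_eq by fastforce
qed

lemma finished_no_late_descendant:
  assumes finished: "\<forall>k'. j < k' \<and> k' < i \<longrightarrow> \<not> has_unvisited_nb T \<sigma> k' i"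
    and "j < k" "k < i" "i \<le> l" "l < length \<sigma>"
  shows "\<not> P\<^sup>*\<^sup>* (\<sigma> ! k) (\<sigma> ! l)"
proof
  assume path: "P\<^sup>*\<^sup>* (\<sigma> ! k) (\<sigma> ! l)"
  let ?visited = "(!) \<sigma> ` {..<i}"
  have "\<sigma> ! k \<in> ?visited"
    using assms(3) by blast
  moreover have "\<sigma> ! l \<notin> ?visited"
    using distinct_order assms(4,5) nth_eq_iff_index_eq by fastforce
  \<comment> \<open>The path leaves the visited prefix at a descendant \<open>\<sigma>\<^sub>k\<^sub>'\<close> of \<open>\<sigma>\<^sub>k\<close>, which is then unfinished.\<close>
  ultimately obtain u v where
    uv: "P\<^sup>*\<^sup>* (\<sigma> ! k) u" "u \<in> ?visited" "P u v" "v \<notin> ?visited" "P\<^sup>*\<^sup>* v (\<sigma> ! l)"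
    using rtranclp_leaves_set[OF path] by meson
  obtain l' where l': "l' \<le> l" "v = \<sigma> ! l'"
    using ancestor_in_prefix uv(5) assms(5) by blast
  then have "i \<le> l'"
    using uv(4) by (meson lessThan_iff image_eqI not_le)
  obtain k' where k': "k' < i" "u = \<sigma> ! k'"
    using uv(2) by blast
  then have "k \<le> k'"
    using ancestor_precedes uv(1) assms(3,4,5) by simp
  have "has_unvisited_nb T \<sigma> k' i"
    unfolding has_unvisited_nb_def using uv(3) k'(2) l' \<open>i \<le> l'\<close> assms(5) tree_iff_parent
    by (meson le_less_trans)
  then show False
    using finished assms(2) \<open>k \<le> k'\<close> k'(1) by simp
qed

end

context
  fixes V :: "'a set" and E :: "'a \<Rightarrow> 'a \<Rightarrow> bool" and \<tau> \<sigma> :: "'a list"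
  assumes tau: "dfs_order V E \<tau>" and symE: "symp E"
    and sigma: "dfs_order V (ltree E \<tau>) \<sigma>" and same_root: "hd \<sigma> = hd \<tau>"
begin

interpretation rooted_tree_dfs V "ltree E \<tau>" "lparent E \<tau>" \<sigma>
proof
  show "dfs_order V (ltree E \<tau>) \<sigma>" by (rule sigma)
  show "ltree E \<tau> u v \<longleftrightarrow> lparent E \<tau> u v \<or> lparent E \<tau> v u" for u v
    by (rule ltree_iff_lparent)
  show "lparent E \<tau> u v \<Longrightarrow> lparent E \<tau> u' v \<Longrightarrow> u = u'" for u u' v
    using lparent_unique dfs_order_distinct[OF tau] by metis
  show "\<not> lparent E \<tau> u (hd \<sigma>)" for u
    using lparent_hd dfs_order_distinct[OF tau] same_root by metis
qed

lemma finished_in_graph: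
  assumes "i < length \<sigma>" "\<forall>k'. j < k' \<and> k' < i \<longrightarrow> \<not> has_unvisited_nb (ltree E \<tau>) \<sigma> k' i"
    and "j < k" "k < i"
  shows "\<not> has_unvisited_nb E \<sigma> k i"
proof
  assume "has_unvisited_nb E \<sigma> k i"
  then obtain l where l: "i \<le> l" "l < length \<sigma>" "E (\<sigma> ! k) (\<sigma> ! l)"
    unfolding has_unvisited_nb_def by blast
  have "\<sigma> ! k \<in> V" "\<sigma> ! l \<in> V"
    using dfs_order_set[OF sigma] assms(1,4) l(2) by auto
  then have "(lparent E \<tau>)\<^sup>*\<^sup>* (\<sigma> ! k) (\<sigma> ! l) \<or> (lparent E \<tau>)\<^sup>*\<^sup>* (\<sigma> ! l) (\<sigma> ! k)"
    using dfs_order_edge_ancestor[OF tau symE l(3)] by blast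
  moreover have "\<not> (lparent E \<tau>)\<^sup>*\<^sup>* (\<sigma> ! k) (\<sigma> ! l)"
    using finished_no_late_descendant assms(2-4) l(1,2) by blast
  moreover have "\<not> (lparent E \<tau>)\<^sup>*\<^sup>* (\<sigma> ! l) (\<sigma> ! k)"
    using ancestor_precedes assms(1,4) l(1,2) by fastforce
  ultimately show False by blast
qed

lemma dfs_step_in_graph:
  assumes "0 < i" "i < length \<sigma>"
  obtains j where "j < i" "has_unvisited_nb E \<sigma> j i"
    "\<forall>k. j < k \<and> k < i \<longrightarrow> \<not> has_unvisited_nb E \<sigma> k i"
    "E (\<sigma> ! j) (\<sigma> ! i)" "lparent E \<tau> (\<sigma> ! j) (\<sigma> ! i)"
proof -
  obtain j where j: "j < i" "has_unvisited_nb (ltree E \<tau>) \<sigma> j i"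
      "\<forall>k. j < k \<and> k < i \<longrightarrow> \<not> has_unvisited_nb (ltree E \<tau>) \<sigma> k i"
      "ltree E \<tau> (\<sigma> ! j) (\<sigma> ! i)"
    using dfs_order_step[OF dfs] assms by blast
  have "has_unvisited_nb E \<sigma> j i"
    using j(2) ltree_imp_edge[OF symE] unfolding has_unvisited_nb_def by blast
  moreover have "\<forall>k. j < k \<and> k < i \<longrightarrow> \<not> has_unvisited_nb E \<sigma> k i"
    using finished_in_graph assms(2) j(3) by blast
  moreover have "E (\<sigma> ! j) (\<sigma> ! i)"
    using j(4) ltree_imp_edge[OF symE] by blast
  moreover have "lparent E \<tau> (\<sigma> ! j) (\<sigma> ! i)"
    using dfs_edge_is_parent assms(2) j(1,4) by blast
  ultimately show thesis
    using that j(1) by blast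
qed

lemma dfs_order_of_ltree_dfs: "dfs_order V E \<sigma>"
proof -
  have "vertex_order V \<sigma>" "\<sigma> \<noteq> []"
    using sigma unfolding dfs_order_def by simp_all
  moreover have "\<exists>j<i. has_unvisited_nb E \<sigma> j i \<and>
      (\<forall>k. j < k \<and> k < i \<longrightarrow> \<not> has_unvisited_nb E \<sigma> k i) \<and> E (\<sigma> ! j) (\<sigma> ! i)"
    if "0 < i" "i < length \<sigma>" for i
    using dfs_step_in_graph[OF that] by blast
  ultimately show ?thesis
    unfolding dfs_order_def by blast
qed

lemma lparent_of_ltree_dfs_nth:
  assumes "i < length \<sigma>"
  shows "lparent E \<sigma> u (\<sigma> ! i) \<longleftrightarrow> lparent E \<tau> u (\<sigma> ! i)"
proof (cases "i = 0")
  case True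
  then have "\<sigma> ! i = hd \<sigma>"
    using assms by (simp add: hd_conv_nth)
  then show ?thesis
    using lparent_hd dfs_order_distinct[OF tau] dfs_order_distinct[OF sigma] same_root by metis
next
  case False
  then obtain j where j: "j < i" "\<forall>k. j < k \<and> k < i \<longrightarrow> \<not> has_unvisited_nb E \<sigma> k i"
      "E (\<sigma> ! j) (\<sigma> ! i)" "lparent E \<tau> (\<sigma> ! j) (\<sigma> ! i)"
    using dfs_step_in_graph assms by blast
  have "\<forall>k. j < k \<and> k < i \<longrightarrow> \<not> E (\<sigma> ! k) (\<sigma> ! i)"
    using j(2) assms unfolding has_unvisited_nb_def by blast
  then have "lparent E \<sigma> u (\<sigma> ! i) \<longleftrightarrow> u = \<sigma> ! j"
    using lparent_nth_iff dfs_order_distinct[OF sigma] assms j(1,3) by metis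
  also have "\<dots> \<longleftrightarrow> lparent E \<tau> u (\<sigma> ! i)"
    using j(4) parent_unique by blast
  finally show ?thesis .
qed

lemma lparent_of_ltree_dfs: "lparent E \<sigma> = lparent E \<tau>"
proof (intro ext)
  fix u v
  show "lparent E \<sigma> u v \<longleftrightarrow> lparent E \<tau> u v"
  proof (cases "v \<in> set \<sigma>")
    case True
    then show ?thesis
      using lparent_of_ltree_dfs_nth by (metis in_set_conv_nth)
  next
    case False
    then show ?thesis
      using lparent_in_set dfs_order_set[OF tau] dfs_order_set[OF sigma] by metis
  qed
qed

lemma ltree_of_ltree_dfs: "ltree E \<sigma> = ltree E \<tau>"
  by (intro ext) (simp add: ltree_iff_lparent lparent_of_ltree_dfs)

end

theorem lemma6:
  fixes V :: "'a set" and E T :: "'a \<Rightarrow> 'a \<Rightarrow> bool" and s :: 'a and \<sigma> :: "'a list"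
  assumes "graph V E" and "connected_graph V E"
    and "is_dfs_ltree V E T s"
    and "dfs_order V T \<sigma>" and "hd \<sigma> = s"
  shows "dfs_order V E \<sigma> \<and> ltree E \<sigma> = T"
proof -
  obtain \<tau> where \<tau>: "dfs_order V E \<tau>" "hd \<tau> = s" "ltree E \<tau> = T"
    using assms(3) unfolding is_dfs_ltree_def by blast
  have "symp E"
    using assms(1) unfolding graph_def by (blast intro: sympI)
  moreover have "dfs_order V (ltree E \<tau>) \<sigma>" "hd \<sigma> = hd \<tau>"
    using assms(4,5) \<tau>(2,3) by simp_all
  ultimately show ?thesis
    using dfs_order_of_ltree_dfs ltree_of_ltree_dfs \<tau>(1,3) by metis
qed

end
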